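(* Let $A^\infty$ be as in the context. Then (i) $(A^\infty,\ell^2(\mathbb{Z}_+),N)$, with $A^\infty$ acting by its defining representation in which $w|n\rangle=|n+1\rangle$, and (ii) $(A^\infty,\mathcal{H}_+,|D|)$, with $A^\infty$ acting on $\mathcal{H}_+$ via $w|l,m\rangle=|l+1,m+1\rangle$, are both regular spectral triples.
   Context: $\mathbb{N}=\{0,1,2,\dots\}$, $\mathbb{Z}_+=\{1,2,\dots\}$. On $\ell^2(\mathbb{Z}_+)$ with orthonormal basis $\{|n\rangle\}_{n\in\mathbb{Z}_+}$, $w$ is the unilateral shift $w|n\rangle=|n+1\rangle$ and $N|n\rangle=n|n\rangle$. $A^\infty$ is the set of operators $f=\sum_{n\in\mathbb{N}}(f_nw^n+f_{-n-1}(w^* )^{n+1})+\sum_{j,k\in\mathbb{N}}f_{jk}w^j(1-ww^* )(w^* )^k$ with $\{f_n\}_{n\in\mathbb{Z}}$ a rapid decay sequence and $\{f_{jk}\}$ a rapid decay matrix (i.e. $\sup(1+|n|)^p|f_n|<\infty$, $\sup(1+j+k)^p|f_{jk}|<\infty$ for all $p$); it is a $*$-algebra, and any such expression makes sense for any isometry $w$. $\mathcal{H}_+$ is the Hilbert space with orthonormal basis $|l,m\rangle$, $l\in\mathbb{N}+\tfrac12$, $m\in\{-l,-l+1,\dots,l\}$, and $|D|\,|l,m\rangle=(l+\tfrac12)|l,m\rangle$; the operator $|l,m\rangle\mapsto|l+1,m+1\rangle$ is an isometry, used as the image of $w$. A spectral triple $(A,\mathcal{H},D)$ (unital $*$-algebra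 $A$ of bounded operators, self-adjoint $D$ with compact resolvent and $[D,a]$ bounded for all $a\in A$) is regular if $A\cup[D,A]\subset\bigcap_{j\in\mathbb{N}}\mathrm{dom}\,\delta^j$, where $\delta(T)=[|D|,T]$. *)

theory Defs
  imports "HOL-Analysis.Analysis"
begin

section \<open>Operators on l2(I) given by their matrices in an orthonormal basis indexed by 'i\<close>

type_synonym 'i mat = "'i \<Rightarrow> 'i \<Rightarrow> complex"
type_synonym 'i vec = "'i \<Rightarrow> complex"

text \<open>The matrix M has operator norm at most C: its sesquilinear form on finitely
  supported vectors is bounded by C times the product of the l2 norms.\<close>
definition norm_le :: "'i mat \<Rightarrow> real \<Rightarrow> bool" where
  "norm_le M C \<longleftrightarrow> (\<forall>S x y. finite S \<longrightarrow>
      cmod (\<Sum>i\<in>S. \<Sum>j\<in>S. cnj (y i) * M i j * x j)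
        \<le> C * sqrt (\<Sum>i\<in>S. (cmod (x i))\<^sup>2) * sqrt (\<Sum>i\<in>S. (cmod (y i))\<^sup>2))"

definition bounded_op :: "'i mat \<Rightarrow> bool" where
  "bounded_op M \<longleftrightarrow> (\<exists>C. norm_le M C)"

definition l2vec :: "'i vec \<Rightarrow> bool" where
  "l2vec u \<longleftrightarrow> (\<lambda>i. (cmod (u i))\<^sup>2) summable_on UNIV"

definition finite_rank :: "'i mat \<Rightarrow> bool" where
  "finite_rank K \<longleftrightarrow> (\<exists>n::nat. \<exists>u v :: nat \<Rightarrow> 'i vec.
      (\<forall>r<n. l2vec (u r) \<and> l2vec (v r)) \<and>
      (\<forall>i j. K i j = (\<Sum>r<n. u r i * cnj (v r j))))"

definition compact_op :: "'i mat \<Rightarrow> bool" where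
  "compact_op M \<longleftrightarrow> bounded_op M \<and>
     (\<forall>\<epsilon>>0. \<exists>K. finite_rank K \<and> norm_le (\<lambda>i j. M i j - K i j) \<epsilon>)"

definition id_op :: "'i mat" where
  "id_op = (\<lambda>i j. if i = j then 1 else 0)"

definition adj_op :: "'i mat \<Rightarrow> 'i mat" where
  "adj_op M = (\<lambda>i j. cnj (M j i))"

definition mult_op :: "'i mat \<Rightarrow> 'i mat \<Rightarrow> 'i mat" where
  "mult_op M N = (\<lambda>i k. infsum (\<lambda>j. M i j * N j k) UNIV)"

text \<open>A self-adjoint operator D diagonal in the basis, D e_i = d i e_i (maximal domain).
  Its resolvent at the imaginary unit is the diagonal matrix 1/(d i - i).\<close>
definition compact_resolvent :: "('i \<Rightarrow> real) \<Rightarrow> bool" where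
  "compact_resolvent d \<longleftrightarrow>
     compact_op (\<lambda>i j. if i = j then 1 / (complex_of_real (d i) - \<i>) else 0)"

definition comm_op :: "('i \<Rightarrow> real) \<Rightarrow> 'i mat \<Rightarrow> 'i mat" where
  "comm_op d a = (\<lambda>i j. complex_of_real (d i - d j) * a i j)"

definition delta_op :: "('i \<Rightarrow> real) \<Rightarrow> 'i mat \<Rightarrow> 'i mat" where
  "delta_op d T = (\<lambda>i j. complex_of_real (\<bar>d i\<bar> - \<bar>d j\<bar>) * T i j)"

text \<open>T lies in the domain of delta^k for every k.\<close>
definition smooth_op :: "('i \<Rightarrow> real) \<Rightarrow> 'i mat \<Rightarrow> bool" where
  "smooth_op d T \<longleftrightarrow> (\<forall>k::nat. bounded_op ((delta_op d ^^ k) T))"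

definition unital_star_algebra :: "'i mat set \<Rightarrow> bool" where
  "unital_star_algebra A \<longleftrightarrow>
     (\<forall>a\<in>A. bounded_op a) \<and> id_op \<in> A \<and>
     (\<forall>a\<in>A. \<forall>b\<in>A. (\<lambda>i j. a i j + b i j) \<in> A) \<and>
     (\<forall>a\<in>A. \<forall>c::complex. (\<lambda>i j. c * a i j) \<in> A) \<and>
     (\<forall>a\<in>A. adj_op a \<in> A) \<and>
     (\<forall>a\<in>A. \<forall>b\<in>A. mult_op a b \<in> A)"

definition spectral_triple :: "'i mat set \<Rightarrow> ('i \<Rightarrow> real) \<Rightarrow> bool" where
  "spectral_triple A d \<longleftrightarrow>
     unital_star_algebra A \<and> compact_resolvent d \<and>
     (\<forall>a\<in>A. bounded_op (comm_op d a))"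

definition regular_spectral_triple :: "'i mat set \<Rightarrow> ('i \<Rightarrow> real) \<Rightarrow> bool" where
  "regular_spectral_triple A d \<longleftrightarrow>
     spectral_triple A d \<and> (\<forall>a\<in>A. smooth_op d a \<and> smooth_op d (comm_op d a))"

definition rapid_seq :: "(int \<Rightarrow> complex) \<Rightarrow> bool" where
  "rapid_seq f \<longleftrightarrow> (\<forall>p::nat. \<exists>C. \<forall>n. (1 + real_of_int \<bar>n\<bar>) ^ p * cmod (f n) \<le> C)"

definition rapid_mat :: "(nat \<Rightarrow> nat \<Rightarrow> complex) \<Rightarrow> bool" where
  "rapid_mat g \<longleftrightarrow> (\<forall>p::nat. \<exists>C. \<forall>j k. (1 + real j + real k) ^ p * cmod (g j k) \<le> C)"

text \<open>Matrix entries <e_a, f e_b> of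
  f = sum_n (f_n w^n + f_(-n-1) (w^*)^(n+1)) + sum_(j,k) g_jk w^j (1 - w w^*) (w^*)^k
  for the isometry w e_i = e_(\<sigma> i) given by an injective map \<sigma> of the basis.\<close>
definition rep_op :: "('i \<Rightarrow> 'i) \<Rightarrow> (int \<Rightarrow> complex) \<Rightarrow> (nat \<Rightarrow> nat \<Rightarrow> complex) \<Rightarrow> 'i mat" where
  "rep_op \<sigma> f g = (\<lambda>a b.
      (\<Sum>n. if a = (\<sigma> ^^ n) b then f (int n) else 0)
    + (\<Sum>n. if b = (\<sigma> ^^ (Suc n)) a then f (- int n - 1) else 0)
    + (\<Sum>j. \<Sum>k. if (\<exists>c. c \<notin> range \<sigma> \<and> a = (\<sigma> ^^ j) c \<and> b = (\<sigma> ^^ k) c)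
                   then g j k else 0))"

definition A_infty :: "('i \<Rightarrow> 'i) \<Rightarrow> 'i mat set" where
  "A_infty \<sigma> = {rep_op \<sigma> f g | f g. rapid_seq f \<and> rapid_mat g}"

text \<open>Basis of l2(Z_+).\<close>
typedef zplus = "{n::nat. 1 \<le> n}"
  by (rule exI[of _ 1]) simp

definition shift_zp :: "zplus \<Rightarrow> zplus" where
  "shift_zp n = Abs_zplus (Rep_zplus n + 1)"

definition N_zp :: "zplus \<Rightarrow> real" where
  "N_zp n = real (Rep_zplus n)"

text \<open>Basis |l,m> of H_+: l in N + 1/2, m in {-l, -l+1, ..., l}.\<close>
typedef hidx = "{(l::real, m::real). (\<exists>k::nat. l = real k + 1/2) \<and>
                   (\<exists>i::nat. m = - l + real i) \<and> m \<le> l}"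
  by (rule exI[of _ "(1/2, 1/2)"]) (auto intro!: exI[of _ 0] exI[of _ 1])

definition shift_h :: "hidx \<Rightarrow> hidx" where
  "shift_h x = Abs_hidx (fst (Rep_hidx x) + 1, snd (Rep_hidx x) + 1)"

definition absD_h :: "hidx \<Rightarrow> real" where
  "absD_h x = fst (Rep_hidx x) + 1/2"

end

theory Submission
  imports Defs
begin

text \<open>An injective map \<open>\<sigma>\<close> of the basis splits it into the orbits \<open>{\<sigma>\<^sup>n c | n \<in> \<nat>}\<close> of the
  basis vectors \<open>c\<close> outside the range of \<open>\<sigma>\<close>. On each orbit the isometry \<open>w\<close> is the unilateral
  shift of \<open>l\<^sup>2(\<nat>)\<close>, and an element of \<open>A\<^sup>\<infinity>\<close> acts by one and the same matrix
  \<open>f(m - n) + g(m, n)\<close>: a Toeplitz matrix with rapidly decaying symbol plus a rapidly decaying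
  matrix. Since \<open>T(f) T(f') = T(f * f')\<close> up to a rapidly decaying matrix, these matrices form a
  \<open>*\<close>-algebra. In both examples the Dirac operator grows by exactly one along each orbit, so
  \<open>[D, a]\<close> and \<open>[|D|, a]\<close> multiply the entry \<open>(m, n)\<close> by \<open>m - n\<close>. Rapid decay absorbs every
  power of \<open>m - n\<close> and still bounds the entries by \<open>C / (1 + |m - n|)\<^sup>2\<close>, whose row and column
  sums are finite; Schur's test then bounds all iterated commutators. The resolvent is compact
  because \<open>|D|\<close> has finite sublevel sets.\<close>

section \<open>Summable weights and Schur's test\<close>

definition inv_sq_weight :: "int \<Rightarrow> real" where
  "inv_sq_weight z = 1 / (1 + real_of_int \<bar>z\<bar>)\<^sup>2"

lemma inv_sq_weight_nonneg: "0 \<le> inv_sq_weight z"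
  by (simp add: inv_sq_weight_def)

lemma summable_on_inv_sq_weight_nat: "(\<lambda>n::nat. inv_sq_weight (int n)) summable_on UNIV"
proof -
  have "summable (\<lambda>n::nat. inverse (real (Suc n) ^ 2))"
    using inverse_power_summable[of 2, where 'a=real] by (subst summable_Suc_iff) simp
  then show ?thesis
    by (intro summable_nonneg_imp_summable_on) (simp_all add: inv_sq_weight_def inverse_eq_divide)
qed

lemma summable_on_inv_sq_weight: "inv_sq_weight summable_on UNIV"
proof -
  have "inv_sq_weight summable_on range int"
    by (subst summable_on_reindex) (simp_all add: o_def summable_on_inv_sq_weight_nat)
  moreover have "inv_sq_weight summable_on range (\<lambda>n. - int n)"
    using summable_on_inv_sq_weight_nat
    by (subst summable_on_reindex) (simp_all add: inj_on_def o_def inv_sq_weight_def)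
  moreover have "UNIV = range int \<union> range (\<lambda>n. - int n)"
    by (auto intro: int_cases2[of x for x])
  ultimately show ?thesis
    by (metis summable_on_union)
qed

lemma infsum_dominated:
  fixes X :: "'a \<Rightarrow> complex"
  assumes u: "u summable_on A" and X: "\<And>i. i \<in> A \<Longrightarrow> norm (X i) \<le> B * u i"
  shows "X summable_on A" and "norm (infsum X A) \<le> B * infsum u A"
proof -
  have Bu: "(\<lambda>i. B * u i) summable_on A"
    using u by (rule summable_on_cmult_right)
  have norm_X: "(\<lambda>i. norm (X i)) summable_on A"
    by (rule summable_on_comparison_test[OF Bu]) (use X in auto)
  then show "X summable_on A"
    by (simp add: summable_on_iff_abs_summable_on_complex)
  have "norm (infsum X A) \<le> infsum (\<lambda>i. norm (X i)) A"
    by (rule norm_infsum_bound[OF norm_X])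
  also have "\<dots> \<le> infsum (\<lambda>i. B * u i) A"
    by (rule infsum_mono[OF norm_X Bu X])
  also have "\<dots> = B * infsum u A"
    by (rule infsum_cmult_right) (use u in auto)
  finally show "norm (infsum X A) \<le> B * infsum u A" .
qed

lemma weighted_norm_infsum_le:
  fixes X :: "'a \<Rightarrow> complex"
  assumes u: "u summable_on A" and W: "0 \<le> W"
    and X: "\<And>i. i \<in> A \<Longrightarrow> W * norm (X i) \<le> B * u i"
  shows "W * norm (infsum X A) \<le> B * infsum u A"
proof -
  have "W * norm (infsum X A) = norm (infsum (\<lambda>i. complex_of_real W * X i) A)"
    using W by (simp add: infsum_cmult_right' norm_mult)
  also have "\<dots> \<le> B * infsum u A"
    by (rule infsum_dominated(2)[OF u]) (use W X in \<open>simp add: norm_mult\<close>)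
  finally show ?thesis .
qed

lemma sum_row_weighted_le:
  assumes "finite S" and row: "\<And>i. (\<Sum>j\<in>S. cmod (M i j)) \<le> R"
  shows "(\<Sum>i\<in>S. \<Sum>j\<in>S. (cmod (y i))\<^sup>2 * cmod (M i j)) \<le> R * (\<Sum>i\<in>S. (cmod (y i))\<^sup>2)"
proof -
  have "(\<Sum>i\<in>S. \<Sum>j\<in>S. (cmod (y i))\<^sup>2 * cmod (M i j)) = (\<Sum>i\<in>S. (cmod (y i))\<^sup>2 * (\<Sum>j\<in>S. cmod (M i j)))"
    by (simp add: sum_distrib_left)
  also have "\<dots> \<le> (\<Sum>i\<in>S. (cmod (y i))\<^sup>2 * R)"
    by (intro sum_mono mult_left_mono row) simp
  finally show ?thesis
    by (simp add: sum_distrib_left mult_ac)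
qed

lemma norm_le_Schur_test:
  fixes M :: "'i mat"
  assumes row: "\<And>S i. finite S \<Longrightarrow> (\<Sum>j\<in>S. cmod (M i j)) \<le> R"
    and col: "\<And>S j. finite S \<Longrightarrow> (\<Sum>i\<in>S. cmod (M i j)) \<le> R"
  shows "norm_le M R"
  unfolding norm_le_def
proof (intro allI impI)
  fix S :: "'i set" and x y :: "'i vec"
  assume S: "finite S"
  have R: "0 \<le> R"
    using row[of "{}"] by simp
  define a where "a p = cmod (y (fst p)) * sqrt (cmod (M (fst p) (snd p)))" for p
  define b where "b p = sqrt (cmod (M (fst p) (snd p))) * cmod (x (snd p))" for p
  define X where "X = (\<Sum>j\<in>S. (cmod (x j))\<^sup>2)"
  define Y where "Y = (\<Sum>i\<in>S. (cmod (y i))\<^sup>2)"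
  have "(\<Sum>p\<in>S\<times>S. (a p)\<^sup>2) = (\<Sum>i\<in>S. \<Sum>j\<in>S. (cmod (y i))\<^sup>2 * cmod (M i j))"
    unfolding sum.cartesian_product' a_def by (simp add: power_mult_distrib)
  then have a: "(\<Sum>p\<in>S\<times>S. (a p)\<^sup>2) \<le> R * Y"
    unfolding Y_def using sum_row_weighted_le[OF S row[OF S]] by simp
  have "(\<Sum>p\<in>S\<times>S. (b p)\<^sup>2) = (\<Sum>j\<in>S. \<Sum>i\<in>S. (cmod (x j))\<^sup>2 * cmod (M i j))"
    unfolding sum.cartesian_product' b_def by (subst sum.swap) (simp add: power_mult_distrib mult_ac)
  then have b: "(\<Sum>p\<in>S\<times>S. (b p)\<^sup>2) \<le> R * X"
    unfolding X_def using sum_row_weighted_le[of S "\<lambda>j i. M i j", OF S col[OF S]] by simp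
  have "cmod (\<Sum>i\<in>S. \<Sum>j\<in>S. cnj (y i) * M i j * x j) \<le> (\<Sum>i\<in>S. cmod (\<Sum>j\<in>S. cnj (y i) * M i j * x j))"
    by (rule norm_sum)
  also have "\<dots> \<le> (\<Sum>i\<in>S. \<Sum>j\<in>S. cmod (cnj (y i) * M i j * x j))"
    by (intro sum_mono norm_sum)
  also have "\<dots> = (\<Sum>p\<in>S\<times>S. a p * b p)"
    unfolding sum.cartesian_product' a_def b_def
    by (intro sum.cong refl) (simp add: norm_mult mult_ac real_sqrt_mult_self)
  also have "\<dots> \<le> sqrt (\<Sum>p\<in>S\<times>S. (a p)\<^sup>2) * sqrt (\<Sum>p\<in>S\<times>S. (b p)\<^sup>2)"
    by (rule real_le_rsqrt[THEN order_trans, OF Cauchy_Schwarz_ineq_sum])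
       (simp_all add: real_sqrt_mult[symmetric])
  also have "\<dots> \<le> sqrt (R * Y) * sqrt (R * X)"
    using a b R by (intro mult_mono real_sqrt_le_mono) (simp_all add: Y_def sum_nonneg)
  also have "\<dots> = R * sqrt X * sqrt Y"
    using R by (simp add: real_sqrt_mult)
  finally show "cmod (\<Sum>i\<in>S. \<Sum>j\<in>S. cnj (y i) * M i j * x j) \<le> R * sqrt X * sqrt Y" .
qed

section \<open>Rapid decay\<close>

definition rapid_decay :: "('a \<Rightarrow> real) \<Rightarrow> ('a \<Rightarrow> complex) \<Rightarrow> bool" where
  "rapid_decay w f \<longleftrightarrow> (\<forall>p::nat. \<exists>C. \<forall>x. w x ^ p * cmod (f x) \<le> C)"

lemma rapid_decayD: "rapid_decay w f \<Longrightarrow> \<exists>C. \<forall>x. w x ^ p * cmod (f x) \<le> C"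
  unfolding rapid_decay_def by blast

lemma rapid_seq_iff: "rapid_seq f \<longleftrightarrow> rapid_decay (\<lambda>z. 1 + real_of_int \<bar>z\<bar>) f"
  by (simp add: rapid_seq_def rapid_decay_def)

lemma rapid_mat_iff: "rapid_mat g \<longleftrightarrow> rapid_decay (\<lambda>(j, k). 1 + real j + real k) (\<lambda>(j, k). g j k)"
  by (simp add: rapid_mat_def rapid_decay_def)

lemma rapid_decay_add:
  assumes w: "\<And>x. 0 \<le> w x" and f: "rapid_decay w f" and g: "rapid_decay w g"
  shows "rapid_decay w (\<lambda>x. f x + g x)"
  unfolding rapid_decay_def
proof
  fix p
  obtain C1 C2 where C1: "\<And>x. w x ^ p * cmod (f x) \<le> C1" and C2: "\<And>x. w x ^ p * cmod (g x) \<le> C2"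
    using rapid_decayD[OF f] rapid_decayD[OF g] by meson
  have "w x ^ p * cmod (f x + g x) \<le> C1 + C2" for x
  proof -
    have "w x ^ p * cmod (f x + g x) \<le> w x ^ p * cmod (f x) + w x ^ p * cmod (g x)"
      using w by (simp add: norm_triangle_ineq mult_left_mono flip: distrib_left)
    then show ?thesis
      using C1[of x] C2[of x] by linarith
  qed
  then show "\<exists>C. \<forall>x. w x ^ p * cmod (f x + g x) \<le> C"
    by blast
qed

lemma rapid_decay_cmult: "rapid_decay w f \<Longrightarrow> rapid_decay w (\<lambda>x. c * f x)"
  unfolding rapid_decay_def norm_mult
  by (metis (no_types, opaque_lifting) mult.left_commute mult_left_mono norm_ge_zero)

lemma rapid_decay_infsum:
  fixes X :: "'a \<Rightarrow> 'b \<Rightarrow> complex"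
  assumes w: "\<And>x. 0 \<le> w x" and u: "u summable_on I"
    and X: "\<And>p. \<exists>C. \<forall>x. \<forall>i\<in>I. w x ^ p * cmod (X x i) \<le> C * u i"
  shows "X x summable_on I" and "rapid_decay w (\<lambda>x. \<Sum>\<^sub>\<infinity>i\<in>I. X x i)"
proof -
  obtain C where "\<forall>x. \<forall>i\<in>I. w x ^ 0 * cmod (X x i) \<le> C * u i"
    using X by blast
  then show "X x summable_on I"
    by (intro infsum_dominated(1)[OF u, where B = C]) simp
  show "rapid_decay w (\<lambda>x. \<Sum>\<^sub>\<infinity>i\<in>I. X x i)"
    unfolding rapid_decay_def
  proof
    fix p
    obtain C where C: "\<forall>x. \<forall>i\<in>I. w x ^ p * cmod (X x i) \<le> C * u i"
      using X by blast
    have "w x ^ p * cmod (\<Sum>\<^sub>\<infinity>i\<in>I. X x i) \<le> C * infsum u I" for x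
      by (rule weighted_norm_infsum_le[OF u]) (use w C in auto)
    then show "\<exists>C. \<forall>x. w x ^ p * cmod (\<Sum>\<^sub>\<infinity>i\<in>I. X x i) \<le> C"
      by blast
  qed
qed

lemma rapid_product_bound:
  fixes x y :: complex and A B N W :: real
  assumes W: "0 \<le> W" "W \<le> A + B - 1" and A: "1 \<le> A" and N: "1 \<le> N" "N \<le> B"
    and x: "A ^ p * cmod x \<le> C1" and y: "B ^ (p + 2) * cmod y \<le> C2"
  shows "W ^ p * cmod (x * y) \<le> C1 * C2 * (1 / N\<^sup>2)"
proof -
  have B: "1 \<le> B"
    using N by linarith
  have "A + B - 1 \<le> A * B"
    using mult_nonneg_nonneg[of "A - 1" "B - 1"] A B by (simp add: algebra_simps)
  then have "W ^ p \<le> A ^ p * B ^ p"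
    using W by (simp add: power_mono flip: power_mult_distrib)
  then have "W ^ p * cmod (x * y) \<le> (A ^ p * B ^ p) * cmod (x * y)"
    by (rule mult_right_mono) simp
  also have "\<dots> = (A ^ p * cmod x) * (B ^ p * cmod y)"
    by (simp add: norm_mult mult_ac)
  also have "\<dots> \<le> C1 * (C2 / B\<^sup>2)"
  proof (rule mult_mono)
    show "B ^ p * cmod y \<le> C2 / B\<^sup>2"
      using y B by (simp add: pos_le_divide_eq power_add power2_eq_square mult_ac)
    show "0 \<le> C1"
      using x A by (meson order_trans mult_nonneg_nonneg norm_ge_zero zero_le_power zero_le_one)
  qed (use x B in simp_all)
  also have "\<dots> \<le> C1 * (C2 / N\<^sup>2)"
  proof (intro mult_left_mono divide_left_mono power_mono)
    show "0 \<le> C1" "0 \<le> C2"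
      using x A y B by (meson order_trans mult_nonneg_nonneg norm_ge_zero zero_le_power zero_le_one)+
  qed (use N in simp_all)
  finally show ?thesis
    by simp
qed

text \<open>The second factor gives up two powers of its weight to pay for the summable factor
  \<open>inv_sq_weight\<close>.\<close>
lemma rapid_decay_product:
  assumes f: "rapid_decay v f" and g: "rapid_decay v' g"
    and v: "\<And>y. 1 \<le> v y" and v': "\<And>y. 1 \<le> v' y"
    and w: "\<And>x i. i \<in> I \<Longrightarrow> 0 \<le> w x \<and> w x \<le> v (\<alpha> x i) + v' (\<beta> x i) - 1"
    and \<nu>: "\<And>x i. i \<in> I \<Longrightarrow> 1 + real_of_int \<bar>\<nu> i\<bar> \<le> v' (\<beta> x i)"
  shows "\<exists>C. \<forall>x. \<forall>i\<in>I. w x ^ p * cmod (f (\<alpha> x i) * g (\<beta> x i)) \<le> C * inv_sq_weight (\<nu> i)"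
proof -
  obtain C1 C2 where C1: "\<And>y. v y ^ p * cmod (f y) \<le> C1"
    and C2: "\<And>y. v' y ^ (p + 2) * cmod (g y) \<le> C2"
    using rapid_decayD[OF f] rapid_decayD[OF g] by meson
  have "w x ^ p * cmod (f (\<alpha> x i) * g (\<beta> x i)) \<le> C1 * C2 * inv_sq_weight (\<nu> i)" if "i \<in> I" for x i
    unfolding inv_sq_weight_def
    by (rule rapid_product_bound[OF _ _ v _ \<nu> C1 C2]) (use w that in auto)
  then show ?thesis
    by blast
qed

lemma rapid_seq_add: "rapid_seq f \<Longrightarrow> rapid_seq f' \<Longrightarrow> rapid_seq (\<lambda>z. f z + f' z)"
  by (simp add: rapid_seq_iff rapid_decay_add)

lemma rapid_seq_cmult: "rapid_seq f \<Longrightarrow> rapid_seq (\<lambda>z. c * f z)"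
  by (simp add: rapid_seq_iff rapid_decay_cmult)

lemma rapid_mat_add: "rapid_mat g \<Longrightarrow> rapid_mat g' \<Longrightarrow> rapid_mat (\<lambda>j k. g j k + g' j k)"
  unfolding rapid_mat_iff by (drule (1) rapid_decay_add[rotated]) (auto simp: split_def)

lemma rapid_mat_cmult: "rapid_mat g \<Longrightarrow> rapid_mat (\<lambda>j k. c * g j k)"
  unfolding rapid_mat_iff by (drule rapid_decay_cmult[where c = c]) (simp add: split_def)

lemma rapid_seq_reflect_cnj: "rapid_seq f \<Longrightarrow> rapid_seq (\<lambda>z. cnj (f (- z)))"
  unfolding rapid_seq_def by (metis abs_minus complex_mod_cnj)

lemma rapid_mat_transpose_cnj: "rapid_mat g \<Longrightarrow> rapid_mat (\<lambda>j k. cnj (g k j))"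
  unfolding rapid_mat_def by (metis add.commute add.assoc complex_mod_cnj)

lemma rapid_mat_infsum:
  fixes X :: "nat \<Rightarrow> nat \<Rightarrow> 'b \<Rightarrow> complex"
  assumes u: "u summable_on I"
    and X: "\<And>p. \<exists>C. \<forall>m k. \<forall>i\<in>I. (1 + real m + real k) ^ p * cmod (X m k i) \<le> C * u i"
  shows "X m k summable_on I" and "rapid_mat (\<lambda>m k. \<Sum>\<^sub>\<infinity>i\<in>I. X m k i)"
proof -
  have w: "\<And>x. 0 \<le> (case x of (m, k) \<Rightarrow> 1 + real m + real k)"
    by (simp add: split_def)
  have X': "\<exists>C. \<forall>x. \<forall>i\<in>I. (case x of (m, k) \<Rightarrow> 1 + real m + real k) ^ p
      * cmod (case_prod X x i) \<le> C * u i" for p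
    using X[of p] by (simp add: split_def)
  show "X m k summable_on I"
    using rapid_decay_infsum(1)[OF w u X', of "(m, k)"] by simp
  show "rapid_mat (\<lambda>m k. \<Sum>\<^sub>\<infinity>i\<in>I. X m k i)"
    using rapid_decay_infsum(2)[OF w u X'] by (simp add: rapid_mat_iff split_def)
qed

section \<open>Toeplitz matrices plus rapidly decaying matrices\<close>

definition toeplitz_plus :: "(int \<Rightarrow> complex) \<Rightarrow> (nat \<Rightarrow> nat \<Rightarrow> complex) \<Rightarrow> nat \<Rightarrow> nat \<Rightarrow> complex" where
  "toeplitz_plus f g m k = f (int m - int k) + g m k"

lemma toeplitz_plus_decay:
  assumes f: "rapid_seq f" and g: "rapid_mat g"
  shows "\<exists>C. \<forall>m n. cmod (of_int (int m - int n) ^ e * toeplitz_plus f g m n)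
                    \<le> C * inv_sq_weight (int m - int n)"
proof -
  obtain C1 C2 where C1: "\<And>z. (1 + real_of_int \<bar>z\<bar>) ^ (e + 2) * cmod (f z) \<le> C1"
    and C2: "\<And>j k. (1 + real j + real k) ^ (e + 2) * cmod (g j k) \<le> C2"
    using f g unfolding rapid_seq_def rapid_mat_def by meson
  have "cmod (of_int (int m - int n) ^ e * toeplitz_plus f g m n) \<le> (C1 + C2) * inv_sq_weight (int m - int n)"
    for m n
  proof -
    define t where "t = 1 + real_of_int \<bar>int m - int n\<bar>"
    have t: "1 \<le> t" "t \<le> 1 + real m + real n"
      unfolding t_def by linarith+
    have "t\<^sup>2 * cmod (of_int (int m - int n) ^ e * toeplitz_plus f g m n)
        \<le> t\<^sup>2 * (t ^ e * (cmod (f (int m - int n)) + cmod (g m n)))"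
      unfolding norm_mult toeplitz_plus_def norm_power norm_of_int
      by (intro mult_left_mono mult_mono power_mono norm_triangle_ineq) (simp_all add: t_def)
    also have "\<dots> = t ^ (e + 2) * cmod (f (int m - int n)) + t ^ (e + 2) * cmod (g m n)"
      by (simp add: algebra_simps power_add power2_eq_square)
    also have "\<dots> \<le> C1 + C2"
    proof (rule add_mono)
      show "t ^ (e + 2) * cmod (f (int m - int n)) \<le> C1"
        unfolding t_def by (rule C1)
      have "t ^ (e + 2) * cmod (g m n) \<le> (1 + real m + real n) ^ (e + 2) * cmod (g m n)"
        using t by (intro mult_right_mono power_mono) simp_all
      then show "t ^ (e + 2) * cmod (g m n) \<le> C2"
        using C2[of m n] by linarith
    qed
    finally have "t\<^sup>2 * cmod (of_int (int m - int n) ^ e * toeplitz_plus f g m n) \<le> C1 + C2" .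
    moreover have "0 < t"
      using t by simp
    ultimately show ?thesis
      unfolding inv_sq_weight_def t_def[symmetric] by (simp add: field_simps)
  qed
  then show ?thesis
    by blast
qed

definition convolution :: "(int \<Rightarrow> complex) \<Rightarrow> (int \<Rightarrow> complex) \<Rightarrow> int \<Rightarrow> complex" where
  "convolution f f' z = (\<Sum>\<^sub>\<infinity>i. f (z - i) * f' i)"

text \<open>The product of the Toeplitz matrices of \<open>f\<close> and \<open>f'\<close> on \<open>\<nat>\<close> is the Toeplitz matrix
  of their convolution minus this matrix, which collects the terms with negative intermediate
  index (a product of two Hankel matrices).\<close>
definition toeplitz_defect :: "(int \<Rightarrow> complex) \<Rightarrow> (int \<Rightarrow> complex) \<Rightarrow> nat \<Rightarrow> nat \<Rightarrow> complex" where
  "toeplitz_defect f f' m k = (\<Sum>\<^sub>\<infinity>j\<in>{..<0}. f (int m - j) * f' (j - int k))"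

lemma rapid_seq_convolution:
  assumes f: "rapid_seq f" and f': "rapid_seq f'"
  shows "(\<lambda>i. f (z - i) * f' i) summable_on UNIV" and "rapid_seq (convolution f f')"
proof -
  have bound: "\<exists>C. \<forall>z. \<forall>i\<in>UNIV. (1 + real_of_int \<bar>z\<bar>) ^ p * cmod (f (z - i) * f' i) \<le> C * inv_sq_weight i"
    for p
    using rapid_decay_product[of _ f _ f' UNIV "\<lambda>z. 1 + real_of_int \<bar>z\<bar>" "\<lambda>z i. z - i" "\<lambda>z i. i" id p] f f'
    by (auto simp: rapid_seq_iff)
  show "(\<lambda>i. f (z - i) * f' i) summable_on UNIV"
    by (rule rapid_decay_infsum(1)[OF _ summable_on_inv_sq_weight bound]) simp
  show "rapid_seq (convolution f f')"
    unfolding rapid_seq_iff convolution_def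
    by (rule rapid_decay_infsum(2)[OF _ summable_on_inv_sq_weight bound]) simp
qed

lemma rapid_mat_toeplitz_defect:
  assumes f: "rapid_seq f" and f': "rapid_seq f'"
  shows "(\<lambda>j. f (int m - j) * f' (j - int k)) summable_on {..<0}"
    and "rapid_mat (toeplitz_defect f f')"
proof -
  have bound: "\<exists>C. \<forall>m k. \<forall>j\<in>{..<0}. (1 + real m + real k) ^ p * cmod (f (int m - j) * f' (j - int k))
      \<le> C * inv_sq_weight j" for p
    using rapid_decay_product[of _ f _ f' "{..<0}" "\<lambda>(m, k). 1 + real m + real k"
        "\<lambda>(m, k) j. int m - j" "\<lambda>(m, k) j. j - int k" id p] f f'
    by (auto simp: rapid_seq_iff split_paired_all)
  have u: "inv_sq_weight summable_on {..<0}"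
    by (rule summable_on_subset[OF summable_on_inv_sq_weight]) simp
  show "(\<lambda>j. f (int m - j) * f' (j - int k)) summable_on {..<0}"
    by (rule rapid_mat_infsum(1)[OF u bound])
  show "rapid_mat (toeplitz_defect f f')"
    unfolding toeplitz_defect_def by (rule rapid_mat_infsum(2)[OF u bound])
qed

lemma toeplitz_product:
  assumes f: "rapid_seq f" and f': "rapid_seq f'"
  shows "(\<lambda>n. f (int m - int n) * f' (int n - int k)) summable_on UNIV"
    and "(\<Sum>\<^sub>\<infinity>n. f (int m - int n) * f' (int n - int k))
           = convolution f f' (int m - int k) - toeplitz_defect f f' m k"
proof -
  define \<phi> where "\<phi> j = f (int m - j) * f' (j - int k)" for j
  have shift: "\<phi> summable_on UNIV \<longleftrightarrow> (\<lambda>i. f (int m - int k - i) * f' i) summable_on UNIV"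
    "(\<Sum>\<^sub>\<infinity>j. \<phi> j) = convolution f f' (int m - int k)"
    unfolding convolution_def
    by (rule summable_on_reindex_bij_witness[of _ "\<lambda>i. i + int k" "\<lambda>j. j - int k"]
        infsum_reindex_bij_witness[of _ "\<lambda>i. i + int k" "\<lambda>j. j - int k"];
        simp add: \<phi>_def algebra_simps)+
  have nat: "(\<lambda>n. f (int m - int n) * f' (int n - int k)) summable_on UNIV \<longleftrightarrow> \<phi> summable_on {0..}"
    "(\<Sum>\<^sub>\<infinity>n. f (int m - int n) * f' (int n - int k)) = (\<Sum>\<^sub>\<infinity>j\<in>{0..}. \<phi> j)"
    by (rule summable_on_reindex_bij_witness[of _ nat int] infsum_reindex_bij_witness[of _ nat int];
        force simp: \<phi>_def)+
  have "\<phi> summable_on UNIV"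
    using shift(1) rapid_seq_convolution(1)[OF f f'] by simp
  then have nonneg: "\<phi> summable_on {0..}"
    by (rule summable_on_subset) simp
  show "(\<lambda>n. f (int m - int n) * f' (int n - int k)) summable_on UNIV"
    using nat(1) nonneg by simp
  have split: "{0::int..} \<union> {..<0} = UNIV" "{0::int..} \<inter> {..<0} = {}"
    by auto
  have "(\<Sum>\<^sub>\<infinity>j. \<phi> j) = (\<Sum>\<^sub>\<infinity>j\<in>{0..}. \<phi> j) + toeplitz_defect f f' m k"
    using infsum_Un_disjoint[OF nonneg rapid_mat_toeplitz_defect(1)[OF f f', of m k, folded \<phi>_def] split(2)]
    unfolding split(1) by (simp add: toeplitz_defect_def \<phi>_def)
  then show "(\<Sum>\<^sub>\<infinity>n. f (int m - int n) * f' (int n - int k))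
           = convolution f f' (int m - int k) - toeplitz_defect f f' m k"
    using nat(2) shift(2) by simp
qed

lemma rapid_mat_toeplitz_times_mat:
  assumes f: "rapid_seq f" and g: "rapid_mat g"
  shows "(\<lambda>n. f (int m - int n) * g n k) summable_on UNIV"
    and "rapid_mat (\<lambda>m k. \<Sum>\<^sub>\<infinity>n. f (int m - int n) * g n k)"
proof -
  have bound: "\<exists>C. \<forall>m k. \<forall>n\<in>UNIV. (1 + real m + real k) ^ p * cmod (f (int m - int n) * g n k)
      \<le> C * inv_sq_weight (int n)" for p
    using rapid_decay_product[of _ f _ "\<lambda>(j, k). g j k" UNIV "\<lambda>(m, k). 1 + real m + real k"
        "\<lambda>(m, k) n. int m - int n" "\<lambda>(m, k) n. (n, k)" int p] f g
    by (auto simp: rapid_seq_iff rapid_mat_iff split_paired_all)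
  show "(\<lambda>n. f (int m - int n) * g n k) summable_on UNIV"
    by (rule rapid_mat_infsum(1)[OF summable_on_inv_sq_weight_nat bound])
  show "rapid_mat (\<lambda>m k. \<Sum>\<^sub>\<infinity>n. f (int m - int n) * g n k)"
    by (rule rapid_mat_infsum(2)[OF summable_on_inv_sq_weight_nat bound])
qed

lemma rapid_mat_mat_times_toeplitz:
  assumes f: "rapid_seq f" and g: "rapid_mat g"
  shows "(\<lambda>n. g m n * f (int n - int k)) summable_on UNIV"
    and "rapid_mat (\<lambda>m k. \<Sum>\<^sub>\<infinity>n. g m n * f (int n - int k))"
proof -
  have bound: "\<exists>C. \<forall>m k. \<forall>n\<in>UNIV. (1 + real m + real k) ^ p * cmod (g m n * f (int n - int k))
      \<le> C * inv_sq_weight (int n)" for p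
    using rapid_decay_product[of _ f _ "\<lambda>(j, k). g j k" UNIV "\<lambda>(m, k). 1 + real m + real k"
        "\<lambda>(m, k) n. int n - int k" "\<lambda>(m, k) n. (m, n)" int p] f g
    by (auto simp: rapid_seq_iff rapid_mat_iff split_paired_all mult.commute)
  show "(\<lambda>n. g m n * f (int n - int k)) summable_on UNIV"
    by (rule rapid_mat_infsum(1)[OF summable_on_inv_sq_weight_nat bound])
  show "rapid_mat (\<lambda>m k. \<Sum>\<^sub>\<infinity>n. g m n * f (int n - int k))"
    by (rule rapid_mat_infsum(2)[OF summable_on_inv_sq_weight_nat bound])
qed

lemma rapid_mat_mat_times_mat:
  assumes g: "rapid_mat g" and g': "rapid_mat g'"
  shows "(\<lambda>n. g m n * g' n k) summable_on UNIV"
    and "rapid_mat (\<lambda>m k. \<Sum>\<^sub>\<infinity>n. g m n * g' n k)"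
proof -
  have bound: "\<exists>C. \<forall>m k. \<forall>n\<in>UNIV. (1 + real m + real k) ^ p * cmod (g m n * g' n k)
      \<le> C * inv_sq_weight (int n)" for p
    using rapid_decay_product[of _ "\<lambda>(j, k). g j k" _ "\<lambda>(j, k). g' j k" UNIV
        "\<lambda>(m, k). 1 + real m + real k" "\<lambda>(m, k) n. (m, n)" "\<lambda>(m, k) n. (n, k)" int p] g g'
    by (auto simp: rapid_mat_iff split_paired_all)
  show "(\<lambda>n. g m n * g' n k) summable_on UNIV"
    by (rule rapid_mat_infsum(1)[OF summable_on_inv_sq_weight_nat bound])
  show "rapid_mat (\<lambda>m k. \<Sum>\<^sub>\<infinity>n. g m n * g' n k)"
    by (rule rapid_mat_infsum(2)[OF summable_on_inv_sq_weight_nat bound])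
qed

lemma toeplitz_plus_mult:
  assumes f: "rapid_seq f" and g: "rapid_mat g" and f': "rapid_seq f'" and g': "rapid_mat g'"
  obtains F G where "rapid_seq F" and "rapid_mat G"
    and "\<And>m k. (\<Sum>\<^sub>\<infinity>n. toeplitz_plus f g m n * toeplitz_plus f' g' n k) = toeplitz_plus F G m k"
proof
  define G where "G m k = (\<Sum>\<^sub>\<infinity>n. f (int m - int n) * g' n k) + (\<Sum>\<^sub>\<infinity>n. g m n * f' (int n - int k))
    + (\<Sum>\<^sub>\<infinity>n. g m n * g' n k) + (- 1) * toeplitz_defect f f' m k" for m k
  show "rapid_seq (convolution f f')"
    by (rule rapid_seq_convolution(2)[OF f f'])
  show "rapid_mat G"
    unfolding G_def
    by (intro rapid_mat_add rapid_mat_cmult rapid_mat_toeplitz_defect(2)[OF f f']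
        rapid_mat_toeplitz_times_mat(2)[OF f g'] rapid_mat_mat_times_toeplitz(2)[OF f' g]
        rapid_mat_mat_times_mat(2)[OF g g'])
  fix m k
  have expand: "(\<lambda>n. toeplitz_plus f g m n * toeplitz_plus f' g' n k) = (\<lambda>n.
      f (int m - int n) * f' (int n - int k) + f (int m - int n) * g' n k
      + g m n * f' (int n - int k) + g m n * g' n k)"
    by (simp add: fun_eq_iff toeplitz_plus_def algebra_simps)
  show "(\<Sum>\<^sub>\<infinity>n. toeplitz_plus f g m n * toeplitz_plus f' g' n k) = toeplitz_plus (convolution f f') G m k"
    unfolding expand
    by (simp add: infsum_add summable_on_add toeplitz_product[OF f f'] toeplitz_plus_def G_def
        rapid_mat_toeplitz_times_mat(1)[OF f g'] rapid_mat_mat_times_toeplitz(1)[OF f' g]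
        rapid_mat_mat_times_mat(1)[OF g g'])
qed

section \<open>Orbits of an injective map of the basis\<close>

lemma suminf_if_conj_eq:
  "(\<Sum>n. if P \<and> n = k then c n else 0) = (if P then c k else (0::complex))"
  using sums_unique[OF sums_single[of k c]] by (cases P) simp_all

locale shift_orbits =
  fixes \<sigma> :: "'i \<Rightarrow> 'i" and root :: "'i \<Rightarrow> 'i" and height :: "'i \<Rightarrow> nat"
  assumes inj_shift: "inj \<sigma>"
    and root_not_in_range: "root x \<notin> range \<sigma>"
    and shift_root: "(\<sigma> ^^ height x) (root x) = x"
begin

lemma funpow_cancel_not_in_range:
  assumes c: "c \<notin> range \<sigma>" and eq: "(\<sigma> ^^ n) c = (\<sigma> ^^ (n + m)) c'"
  shows "m = 0 \<and> c = c'"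
proof -
  have c_eq: "c = (\<sigma> ^^ m) c'"
    using eq inj_fn[OF inj_shift, of n] by (simp add: funpow_add inj_eq)
  have "m = 0"
  proof (rule ccontr)
    assume "m \<noteq> 0"
    then obtain m' where "m = Suc m'"
      using not0_implies_Suc by blast
    then have "c \<in> range \<sigma>"
      using c_eq by simp
    with c show False
      by contradiction
  qed
  with c_eq show ?thesis
    by simp
qed

lemma funpow_eq_not_in_range:
  assumes c: "c \<notin> range \<sigma>" and c': "c' \<notin> range \<sigma>" and eq: "(\<sigma> ^^ n) c = (\<sigma> ^^ n') c'"
  shows "c = c' \<and> n = n'"
proof (cases "n \<le> n'")
  case True
  then obtain m where "n' = n + m"
    using le_Suc_ex by blast
  then show ?thesis
    using funpow_cancel_not_in_range[OF c] eq by auto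
next
  case False
  then obtain m where "n = n' + m"
    using le_Suc_ex[of n' n] by auto
  then show ?thesis
    using funpow_cancel_not_in_range[OF c', of n' m c] eq by auto
qed

lemma root_height_funpow:
  assumes "c \<notin> range \<sigma>"
  shows "root ((\<sigma> ^^ n) c) = c" and "height ((\<sigma> ^^ n) c) = n"
  using funpow_eq_not_in_range[OF root_not_in_range assms shift_root] by simp_all

lemma eq_iff_root_height: "a = b \<longleftrightarrow> root a = root b \<and> height a = height b"
  by (metis shift_root)

lemma funpow_eq_iff: "a = (\<sigma> ^^ n) b \<longleftrightarrow> root a = root b \<and> height a = height b + n"
proof -
  have "(\<sigma> ^^ n) b = (\<sigma> ^^ (n + height b)) (root b)"
    by (metis funpow_add o_apply shift_root)
  then show ?thesis
    using root_height_funpow[OF root_not_in_range] by (metis add.commute eq_iff_root_height)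
qed

lemma common_root_iff:
  "(\<exists>c. c \<notin> range \<sigma> \<and> a = (\<sigma> ^^ j) c \<and> b = (\<sigma> ^^ k) c)
     \<longleftrightarrow> root a = root b \<and> j = height a \<and> k = height b"
  by (metis root_height_funpow root_not_in_range shift_root)

definition orbit_op :: "(nat \<Rightarrow> nat \<Rightarrow> complex) \<Rightarrow> 'i mat" where
  "orbit_op K = (\<lambda>a b. if root a = root b then K (height a) (height b) else 0)"

lemma rep_op_eq_orbit_op: "rep_op \<sigma> f g = orbit_op (toeplitz_plus f g)"
proof (intro ext)
  fix a b
  \<comment> \<open>each of the three series in \<open>rep_op\<close> has at most one nonzero term\<close>
  have pos: "a = (\<sigma> ^^ n) b \<longleftrightarrow> (root a = root b \<and> height b \<le> height a) \<and> n = height a - height b"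
    for n
    using funpow_eq_iff[of a n b] by auto
  have neg: "b = (\<sigma> ^^ Suc n) a
      \<longleftrightarrow> (root a = root b \<and> height a < height b) \<and> n = height b - height a - 1" for n
    using funpow_eq_iff[of b "Suc n" a] by auto
  have diag: "(\<exists>c. c \<notin> range \<sigma> \<and> a = (\<sigma> ^^ j) c \<and> b = (\<sigma> ^^ k) c)
      \<longleftrightarrow> (root a = root b \<and> j = height a) \<and> k = height b" for j k
    using common_root_iff by auto
  show "rep_op \<sigma> f g a b = orbit_op (toeplitz_plus f g) a b"
    unfolding rep_op_def pos neg diag suminf_if_conj_eq
    by (auto simp: orbit_op_def toeplitz_plus_def of_nat_diff)
qed

lemma A_infty_iff:
  "M \<in> A_infty \<sigma> \<longleftrightarrow> (\<exists>f g. rapid_seq f \<and> rapid_mat g \<and> M = orbit_op (toeplitz_plus f g))"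
  by (auto simp: A_infty_def rep_op_eq_orbit_op)

lemma orbit_op_row_sum_le:
  assumes K: "\<And>m n. cmod (K m n) \<le> C * inv_sq_weight (int m - int n)" and S: "finite S"
  shows "(\<Sum>b\<in>S. cmod (orbit_op K a b)) \<le> C * (\<Sum>\<^sub>\<infinity>z. inv_sq_weight z)"
proof -
  define S' where "S' = {b \<in> S. root b = root a}"
  define h where "h b = int (height a) - int (height b)" for b
  have C: "0 \<le> C"
    using K[of 0 0] norm_ge_zero[of "K 0 0"] by (simp add: inv_sq_weight_def del: norm_ge_zero)
  have "inj_on h S'"
  proof (rule inj_onI)
    fix b b'
    assume "b \<in> S'" "b' \<in> S'" "h b = h b'"
    then have "root b = root b'" "height b = height b'"
      by (auto simp: S'_def h_def)
    then show "b = b'"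
      by (metis shift_root)
  qed
  then have "(\<Sum>b\<in>S'. inv_sq_weight (h b)) = (\<Sum>z\<in>h ` S'. inv_sq_weight z)"
    by (simp add: sum.reindex)
  also have "\<dots> \<le> (\<Sum>\<^sub>\<infinity>z. inv_sq_weight z)"
    using S by (intro finite_sum_le_infsum summable_on_inv_sq_weight) (auto simp: inv_sq_weight_nonneg S'_def)
  finally have weights: "(\<Sum>b\<in>S'. inv_sq_weight (h b)) \<le> (\<Sum>\<^sub>\<infinity>z. inv_sq_weight z)" .
  have "(\<Sum>b\<in>S. cmod (orbit_op K a b)) = (\<Sum>b\<in>S'. cmod (K (height a) (height b)))"
    unfolding S'_def orbit_op_def by (subst sum.inter_filter[OF S]) (auto intro!: sum.cong)
  also have "\<dots> \<le> C * (\<Sum>b\<in>S'. inv_sq_weight (h b))"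
    unfolding h_def sum_distrib_left by (intro sum_mono K)
  also have "\<dots> \<le> C * (\<Sum>\<^sub>\<infinity>z. inv_sq_weight z)"
    using weights C by (rule mult_left_mono)
  finally show ?thesis .
qed

lemma bounded_orbit_op:
  assumes K: "\<And>m n. cmod (K m n) \<le> C * inv_sq_weight (int m - int n)"
  shows "bounded_op (orbit_op K)"
  unfolding bounded_op_def
proof (intro exI norm_le_Schur_test)
  fix S :: "'i set" and a
  assume "finite S"
  then show "(\<Sum>b\<in>S. cmod (orbit_op K a b)) \<le> C * (\<Sum>\<^sub>\<infinity>z. inv_sq_weight z)"
    by (rule orbit_op_row_sum_le[OF K])
next
  fix S :: "'i set" and b
  assume S: "finite S"
  have K': "cmod (K n m) \<le> C * inv_sq_weight (int m - int n)" for m n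
    using K[of n m] by (simp add: inv_sq_weight_def abs_minus_commute)
  have "(\<Sum>a\<in>S. cmod (orbit_op K a b)) = (\<Sum>a\<in>S. cmod (orbit_op (\<lambda>m n. K n m) b a))"
    unfolding orbit_op_def by (intro sum.cong) auto
  also have "\<dots> \<le> C * (\<Sum>\<^sub>\<infinity>z. inv_sq_weight z)"
    by (rule orbit_op_row_sum_le[OF K' S])
  finally show "(\<Sum>a\<in>S. cmod (orbit_op K a b)) \<le> C * (\<Sum>\<^sub>\<infinity>z. inv_sq_weight z)" .
qed

lemma bounded_orbit_op_toeplitz_plus:
  assumes "rapid_seq f" and "rapid_mat g"
  shows "bounded_op (orbit_op (\<lambda>m n. of_int (int m - int n) ^ e * toeplitz_plus f g m n))"
proof -
  obtain C where "\<And>m n. cmod (of_int (int m - int n) ^ e * toeplitz_plus f g m n)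
                              \<le> C * inv_sq_weight (int m - int n)"
    using toeplitz_plus_decay[OF assms, of e] by blast
  then show ?thesis
    by (rule bounded_orbit_op)
qed

lemma mult_op_orbit_op:
  "mult_op (orbit_op K) (orbit_op K') = orbit_op (\<lambda>m k. \<Sum>\<^sub>\<infinity>n. K m n * K' n k)"
proof (intro ext)
  fix a c
  define orbit where "orbit = range (\<lambda>n. (\<sigma> ^^ n) (root a))"
  have off_orbit: "orbit_op K a b = 0" if "b \<notin> orbit" for b
  proof -
    have "b = (\<sigma> ^^ height b) (root b)"
      by (rule shift_root[symmetric])
    then have "root b \<noteq> root a"
      using that unfolding orbit_def by (metis rangeI)
    then show ?thesis
      by (simp add: orbit_op_def)
  qed
  have inj: "inj (\<lambda>n. (\<sigma> ^^ n) (root a))"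
    by (rule injI) (metis root_height_funpow(2)[OF root_not_in_range])
  have "mult_op (orbit_op K) (orbit_op K') a c = (\<Sum>\<^sub>\<infinity>b\<in>orbit. orbit_op K a b * orbit_op K' b c)"
    unfolding mult_op_def by (rule infsum_cong_neutral) (simp_all add: off_orbit)
  also have "\<dots> = (\<Sum>\<^sub>\<infinity>n. orbit_op K a ((\<sigma> ^^ n) (root a)) * orbit_op K' ((\<sigma> ^^ n) (root a)) c)"
    unfolding orbit_def infsum_reindex[OF inj] by (simp add: o_def)
  also have "\<dots> = orbit_op (\<lambda>m k. \<Sum>\<^sub>\<infinity>n. K m n * K' n k) a c"
    by (cases "root a = root c") (simp_all add: orbit_op_def root_height_funpow[OF root_not_in_range])
  finally show "mult_op (orbit_op K) (orbit_op K') a c = orbit_op (\<lambda>m k. \<Sum>\<^sub>\<infinity>n. K m n * K' n k) a c" .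
qed

lemma adj_op_orbit_op: "adj_op (orbit_op K) = orbit_op (\<lambda>m k. cnj (K k m))"
  by (auto simp: fun_eq_iff adj_op_def orbit_op_def)

lemma id_op_eq_orbit_op: "id_op = orbit_op (\<lambda>m k. if m = k then 1 else 0)"
proof (intro ext)
  fix a b
  show "id_op a b = orbit_op (\<lambda>m k. if m = k then 1 else 0) a b"
    using eq_iff_root_height[of a b] by (auto simp: id_op_def orbit_op_def)
qed

lemma id_op_mem_A_infty: "id_op \<in> A_infty \<sigma>"
proof -
  have "id_op = orbit_op (toeplitz_plus (\<lambda>z. if z = 0 then 1 else 0) (\<lambda>m k. 0))"
    by (simp add: id_op_eq_orbit_op toeplitz_plus_def[abs_def])
  moreover have "rapid_seq (\<lambda>z. if z = 0 then 1 else 0)"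
    unfolding rapid_seq_def by (intro allI exI[of _ 1]) simp
  moreover have "rapid_mat (\<lambda>m k. 0)"
    unfolding rapid_mat_def by (intro allI exI[of _ 0]) simp
  ultimately show ?thesis
    by (auto simp: A_infty_iff)
qed

lemma mult_op_mem_A_infty:
  assumes "a \<in> A_infty \<sigma>" and "b \<in> A_infty \<sigma>"
  shows "mult_op a b \<in> A_infty \<sigma>"
proof -
  obtain f g f' g' where f: "rapid_seq f" and g: "rapid_mat g" and a: "a = orbit_op (toeplitz_plus f g)"
    and f': "rapid_seq f'" and g': "rapid_mat g'" and b: "b = orbit_op (toeplitz_plus f' g')"
    using assms by (auto simp: A_infty_iff)
  obtain F G where "rapid_seq F" "rapid_mat G"
    and "\<And>m k. (\<Sum>\<^sub>\<infinity>n. toeplitz_plus f g m n * toeplitz_plus f' g' n k) = toeplitz_plus F G m k"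
    using toeplitz_plus_mult[OF f g f' g'] by blast
  then show ?thesis
    by (auto simp: A_infty_iff a b mult_op_orbit_op)
qed

lemma unital_star_algebra_A_infty: "unital_star_algebra (A_infty \<sigma>)"
  unfolding unital_star_algebra_def
proof (intro conjI ballI allI id_op_mem_A_infty mult_op_mem_A_infty)
  fix a
  assume "a \<in> A_infty \<sigma>"
  then obtain f g where f: "rapid_seq f" and g: "rapid_mat g" and a: "a = orbit_op (toeplitz_plus f g)"
    by (auto simp: A_infty_iff)
  show "bounded_op a"
    using bounded_orbit_op_toeplitz_plus[OF f g, of 0] by (simp add: a)
  have "(\<lambda>m k. cnj (toeplitz_plus f g k m)) = toeplitz_plus (\<lambda>z. cnj (f (- z))) (\<lambda>m k. cnj (g k m))"
    by (simp add: fun_eq_iff toeplitz_plus_def)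
  then have "adj_op a = orbit_op (toeplitz_plus (\<lambda>z. cnj (f (- z))) (\<lambda>m k. cnj (g k m)))"
    by (simp add: a adj_op_orbit_op)
  then show "adj_op a \<in> A_infty \<sigma>"
    using rapid_seq_reflect_cnj[OF f] rapid_mat_transpose_cnj[OF g] by (auto simp: A_infty_iff)
  fix c :: complex
  have "(\<lambda>i j. c * a i j) = orbit_op (toeplitz_plus (\<lambda>z. c * f z) (\<lambda>m k. c * g m k))"
    by (auto simp: a fun_eq_iff orbit_op_def toeplitz_plus_def algebra_simps)
  then show "(\<lambda>i j. c * a i j) \<in> A_infty \<sigma>"
    using rapid_seq_cmult[OF f] rapid_mat_cmult[OF g] by (auto simp: A_infty_iff)
  fix b
  assume "b \<in> A_infty \<sigma>"
  then obtain f' g' where f': "rapid_seq f'" and g': "rapid_mat g'" and b: "b = orbit_op (toeplitz_plus f' g')"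
    by (auto simp: A_infty_iff)
  have "(\<lambda>i j. a i j + b i j) = orbit_op (toeplitz_plus (\<lambda>z. f z + f' z) (\<lambda>m k. g m k + g' m k))"
    by (auto simp: a b fun_eq_iff orbit_op_def toeplitz_plus_def)
  then show "(\<lambda>i j. a i j + b i j) \<in> A_infty \<sigma>"
    using rapid_seq_add[OF f f'] rapid_mat_add[OF g g'] by (auto simp: A_infty_iff)
qed

end

section \<open>Dirac operators growing by one along the orbits\<close>

locale shift_orbits_dirac = shift_orbits \<sigma> root height
  for \<sigma> :: "'i \<Rightarrow> 'i" and root and height +
  fixes d :: "'i \<Rightarrow> real"
  assumes dirac_shift: "d x = d (root x) + real (height x)"
    and dirac_nonneg: "0 \<le> d x"
begin

lemma dirac_diff:
  "root a = root b \<Longrightarrow> complex_of_real (d a - d b) = of_int (int (height a) - int (height b))"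
  using dirac_shift[of a] dirac_shift[of b] by simp

lemma comm_op_orbit_op: "comm_op d (orbit_op K) = orbit_op (\<lambda>m n. of_int (int m - int n) * K m n)"
  by (auto simp: fun_eq_iff comm_op_def orbit_op_def dirac_diff simp del: of_real_diff)

lemma delta_op_orbit_op: "delta_op d (orbit_op K) = orbit_op (\<lambda>m n. of_int (int m - int n) * K m n)"
  by (auto simp: fun_eq_iff delta_op_def orbit_op_def dirac_diff abs_of_nonneg[OF dirac_nonneg]
      simp del: of_real_diff)

lemma funpow_delta_op_orbit_op:
  "(delta_op d ^^ k) (orbit_op K) = orbit_op (\<lambda>m n. of_int (int m - int n) ^ k * K m n)"
  by (induction k) (simp_all add: delta_op_orbit_op mult.assoc)

theorem regular_spectral_triple_A_infty:
  assumes "compact_resolvent d"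
  shows "regular_spectral_triple (A_infty \<sigma>) d"
  unfolding regular_spectral_triple_def spectral_triple_def
proof (intro conjI ballI unital_star_algebra_A_infty assms)
  fix a
  assume "a \<in> A_infty \<sigma>"
  then obtain f g where f: "rapid_seq f" and g: "rapid_mat g" and a: "a = orbit_op (toeplitz_plus f g)"
    by (auto simp: A_infty_iff)
  have bounded: "bounded_op (orbit_op (\<lambda>m n. of_int (int m - int n) ^ e * toeplitz_plus f g m n))" for e
    by (rule bounded_orbit_op_toeplitz_plus[OF f g])
  show "bounded_op (comm_op d a)"
    using bounded[of 1] by (simp add: a comm_op_orbit_op)
  show "smooth_op d a"
    unfolding smooth_op_def a funpow_delta_op_orbit_op using bounded by blast
  show "smooth_op d (comm_op d a)"
    unfolding smooth_op_def a comm_op_orbit_op funpow_delta_op_orbit_op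
  proof
    fix k
    show "bounded_op (orbit_op (\<lambda>m n. of_int (int m - int n) ^ k
                                    * (of_int (int m - int n) * toeplitz_plus f g m n)))"
      using bounded[of "Suc k"] by (simp only: power_Suc2 mult.assoc)
  qed
qed

end

lemma norm_le_diagonal:
  assumes "\<And>i. cmod (D i) \<le> R" and "0 \<le> R"
  shows "norm_le (\<lambda>i j. if i = j then D i else 0) R"
  by (rule norm_le_Schur_test) (use assms in \<open>simp_all add: if_distrib[of cmod] sum.delta sum.delta' cong: if_cong\<close>)

lemma norm_resolvent_le: "cmod (1 / (complex_of_real t - \<i>)) \<le> 1 / max 1 \<bar>t\<bar>"
proof -
  have "max 1 \<bar>t\<bar> \<le> cmod (complex_of_real t - \<i>)"
    using abs_Re_le_cmod[of "complex_of_real t - \<i>"] abs_Im_le_cmod[of "complex_of_real t - \<i>"] by simp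
  then show ?thesis
    by (simp add: norm_divide frac_le)
qed

lemma finite_rank_diagonal:
  assumes "finite T"
  shows "finite_rank (\<lambda>i j. if i = j \<and> i \<in> T then D i else 0)"
proof -
  obtain n :: nat and h where h: "T = h ` {..<n}" "inj_on h {..<n}"
    using finite_imp_nat_seg_image_inj_on[OF assms] unfolding lessThan_def by blast
  show ?thesis
    unfolding finite_rank_def
  proof (intro exI conjI allI impI)
    fix r :: nat
    show "l2vec (\<lambda>i. if i = h r then D i else 0)" "l2vec (\<lambda>i. if i = h r then 1 else 0)"
      unfolding l2vec_def by (auto intro: finite_nonzero_values_imp_summable_on)
  next
    fix i j
    have "(\<Sum>r<n. (if i = h r then D i else 0) * cnj (if j = h r then 1 else 0))
        = (\<Sum>r<n. (\<lambda>t. if t = i then (if i = j then D i else 0) else 0) (h r))"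
      by (intro sum.cong) auto
    also have "\<dots> = (\<Sum>t\<in>T. if t = i then (if i = j then D i else 0) else 0)"
      unfolding h(1) by (simp add: sum.reindex[OF h(2)])
    finally show "(if i = j \<and> i \<in> T then D i else 0)
        = (\<Sum>r<n. (if i = h r then D i else 0) * cnj (if j = h r then 1 else 0))"
      using assms by simp
  qed
qed

lemma compact_resolvent_if_finite_sublevels:
  fixes d :: "'i \<Rightarrow> real"
  assumes finite_sublevel: "\<And>R. finite {x. d x \<le> R}"
  shows "compact_resolvent d"
  unfolding compact_resolvent_def compact_op_def
proof (intro conjI allI impI)
  define D where "D i = 1 / (complex_of_real (d i) - \<i>)" for i
  have D_le: "cmod (D i) \<le> 1 / max 1 \<bar>d i\<bar>" for i
    unfolding D_def by (rule norm_resolvent_le)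
  show "bounded_op (\<lambda>i j. if i = j then 1 / (complex_of_real (d i) - \<i>) else 0)"
    unfolding bounded_op_def D_def[symmetric]
    by (intro exI[of _ 1] norm_le_diagonal order_trans[OF D_le]) simp_all
  fix e :: real
  assume e: "0 < e"
  define T where "T = {x. d x \<le> 1 / e}"
  define K where "K i j = (if i = j \<and> i \<in> T then D i else 0)" for i j
  have "finite_rank K"
    unfolding K_def[abs_def] T_def by (rule finite_rank_diagonal[OF finite_sublevel])
  moreover have "norm_le (\<lambda>i j. (if i = j then D i else 0) - K i j) e"
  proof -
    have "cmod (if i \<in> T then 0 else D i) \<le> e" for i
    proof (cases "i \<in> T")
      case False
      then have "1 / e < max 1 \<bar>d i\<bar>"
        by (simp add: T_def)
      then have "1 / max 1 \<bar>d i\<bar> \<le> e"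
        using e by (simp add: field_simps)
      then show ?thesis
        using False D_le[of i] by simp
    qed (use e in simp)
    then have "norm_le (\<lambda>i j. if i = j then (if i \<in> T then 0 else D i) else 0) e"
      using e by (intro norm_le_diagonal) simp_all
    moreover have "(\<lambda>i j. (if i = j then D i else 0) - K i j)
        = (\<lambda>i j. if i = j then (if i \<in> T then 0 else D i) else 0)"
      by (auto simp: fun_eq_iff K_def)
    ultimately show ?thesis
      by simp
  qed
  ultimately show "\<exists>K. finite_rank K \<and> norm_le (\<lambda>i j. (if i = j then 1 / (complex_of_real (d i) - \<i>) else 0) - K i j) e"
    unfolding D_def by blast
qed

section \<open>The two examples\<close>

lemma le_nat_ceiling: "real n \<le> R \<Longrightarrow> n \<le> nat \<lceil>R\<rceil>"
  by (metis ceiling_mono ceiling_of_nat nat_int nat_mono)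

lemma finite_nat_real_le: "finite {n::nat. real n \<le> R}"
  by (rule finite_subset[of _ "{..nat \<lceil>R\<rceil>}"]) (auto intro: le_nat_ceiling)

lemma Rep_zplus_ge_1: "1 \<le> Rep_zplus x"
  using Rep_zplus[of x] by simp

lemma Rep_shift_zp: "Rep_zplus (shift_zp x) = Rep_zplus x + 1"
  unfolding shift_zp_def by (rule Abs_zplus_inverse) simp

lemma Rep_funpow_shift_zp: "Rep_zplus ((shift_zp ^^ n) (Abs_zplus 1)) = n + 1"
  by (induction n) (simp_all add: Rep_shift_zp Abs_zplus_inverse)

lemma shift_orbits_dirac_zp:
  "shift_orbits_dirac shift_zp (\<lambda>_. Abs_zplus 1) (\<lambda>x. Rep_zplus x - 1) N_zp"
proof
  show "inj shift_zp"
    by (metis Rep_shift_zp Rep_zplus_inject add_right_cancel injI)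
  fix x
  show "Abs_zplus 1 \<notin> range shift_zp"
    using Rep_shift_zp Rep_zplus_ge_1 by (metis Abs_zplus_inverse add_le_same_cancel2 imageE
        le_zero_eq mem_Collect_eq one_neq_zero order_refl)
  show "(shift_zp ^^ (Rep_zplus x - 1)) (Abs_zplus 1) = x"
    using Rep_funpow_shift_zp[of "Rep_zplus x - 1"] Rep_zplus_ge_1[of x]
    by (simp add: Rep_zplus_inject[symmetric])
  show "N_zp x = N_zp (Abs_zplus 1) + real (Rep_zplus x - 1)"
    using Rep_zplus_ge_1[of x] by (simp add: N_zp_def Abs_zplus_inverse of_nat_diff)
  show "0 \<le> N_zp x"
    by (simp add: N_zp_def)
qed

lemma finite_sublevel_N_zp: "finite {x. N_zp x \<le> R}"
proof (rule finite_imageD)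
  show "finite (Rep_zplus ` {x. N_zp x \<le> R})"
    by (rule finite_subset[OF _ finite_nat_real_le[of R]]) (auto simp: N_zp_def)
qed (simp add: inj_on_def Rep_zplus_inject)

text \<open>\<open>hidx_of k i\<close> is the basis vector \<open>|k + 1/2, i - k - 1/2\<rangle>\<close>; the shift maps \<open>(k, i)\<close> to
  \<open>(k + 1, i + 2)\<close>, so the roots of its orbits are the points with \<open>k = 0\<close> or \<open>i \<le> 1\<close>.\<close>
definition hidx_of :: "nat \<Rightarrow> nat \<Rightarrow> hidx" where
  "hidx_of k i = Abs_hidx (real k + 1/2, - (real k + 1/2) + real i)"

definition hidx_level :: "hidx \<Rightarrow> nat" where
  "hidx_level x = nat \<lfloor>fst (Rep_hidx x)\<rfloor>"

definition hidx_index :: "hidx \<Rightarrow> nat" where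
  "hidx_index x = nat \<lfloor>snd (Rep_hidx x) + fst (Rep_hidx x)\<rfloor>"

lemma Rep_hidx_of:
  assumes "i \<le> 2 * k + 1"
  shows "Rep_hidx (hidx_of k i) = (real k + 1/2, - (real k + 1/2) + real i)"
  unfolding hidx_of_def
proof (rule Abs_hidx_inverse)
  have "real i \<le> 2 * real k + 1"
    using assms by linarith
  then show "(real k + 1/2, - (real k + 1/2) + real i) \<in> {(l, m). (\<exists>k::nat. l = real k + 1/2) \<and>
      (\<exists>i::nat. m = - l + real i) \<and> m \<le> l}"
    by auto
qed

lemma floor_of_nat_plus_half: "\<lfloor>real k + 1/2\<rfloor> = int k"
  by (simp add: floor_eq_iff)

lemma hidx_level_of: "i \<le> 2 * k + 1 \<Longrightarrow> hidx_level (hidx_of k i) = k"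
  by (simp add: hidx_level_def Rep_hidx_of floor_of_nat_plus_half)

lemma hidx_index_of: "i \<le> 2 * k + 1 \<Longrightarrow> hidx_index (hidx_of k i) = i"
  by (simp add: hidx_index_def Rep_hidx_of)

lemma hidx_cases: "hidx_index x \<le> 2 * hidx_level x + 1 \<and> x = hidx_of (hidx_level x) (hidx_index x)"
proof -
  obtain l m where lm: "Rep_hidx x = (l, m)"
    by (cases "Rep_hidx x")
  then obtain k i where k: "l = real k + 1/2" and i: "m = - l + real i" and "m \<le> l"
    using Rep_hidx[of x] by auto
  then have valid: "i \<le> 2 * k + 1"
    by linarith
  have "hidx_level x = k" "hidx_index x = i"
    by (simp_all add: hidx_level_def hidx_index_def lm k i floor_of_nat_plus_half)
  moreover have "x = hidx_of k i"
    using Rep_hidx_of[OF valid] lm k i by (metis Rep_hidx_inverse)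
  ultimately show ?thesis
    using valid by simp
qed

lemma hidx_of_eq_iff:
  "i \<le> 2 * k + 1 \<Longrightarrow> i' \<le> 2 * k' + 1 \<Longrightarrow> hidx_of k i = hidx_of k' i' \<longleftrightarrow> k = k' \<and> i = i'"
  by (metis hidx_level_of hidx_index_of)

lemma shift_h_hidx_of: "i \<le> 2 * k + 1 \<Longrightarrow> shift_h (hidx_of k i) = hidx_of (k + 1) (i + 2)"
  unfolding shift_h_def by (simp add: Rep_hidx_of) (simp add: hidx_of_def algebra_simps)

lemma funpow_shift_h_hidx_of:
  "i \<le> 2 * k + 1 \<Longrightarrow> (shift_h ^^ n) (hidx_of k i) = hidx_of (k + n) (i + 2 * n)"
  by (induction n) (simp_all add: shift_h_hidx_of)

lemma absD_h_hidx_of: "i \<le> 2 * k + 1 \<Longrightarrow> absD_h (hidx_of k i) = real k + 1"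
  by (simp add: absD_h_def Rep_hidx_of)

definition hidx_height :: "hidx \<Rightarrow> nat" where
  "hidx_height x = min (hidx_level x) (hidx_index x div 2)"

definition hidx_root :: "hidx \<Rightarrow> hidx" where
  "hidx_root x = hidx_of (hidx_level x - hidx_height x) (hidx_index x - 2 * hidx_height x)"

lemma hidx_root_valid: "hidx_index x - 2 * hidx_height x \<le> 2 * (hidx_level x - hidx_height x) + 1"
  using hidx_cases[of x] unfolding hidx_height_def by auto

lemma inj_shift_h: "inj shift_h"
proof (rule injI)
  fix x y
  assume "shift_h x = shift_h y"
  then have "hidx_of (hidx_level x + 1) (hidx_index x + 2) = hidx_of (hidx_level y + 1) (hidx_index y + 2)"
    using hidx_cases[of x] hidx_cases[of y] by (metis shift_h_hidx_of)
  then show "x = y"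
    using hidx_cases[of x] hidx_cases[of y] by (simp add: hidx_of_eq_iff)
qed

lemma hidx_root_not_in_range: "hidx_root x \<notin> range shift_h"
proof
  assume "hidx_root x \<in> range shift_h"
  then obtain y where "hidx_root x = shift_h y"
    by blast
  then have "hidx_of (hidx_level x - hidx_height x) (hidx_index x - 2 * hidx_height x)
      = hidx_of (hidx_level y + 1) (hidx_index y + 2)"
    using hidx_cases[of y] unfolding hidx_root_def by (metis shift_h_hidx_of)
  moreover have "hidx_index y + 2 \<le> 2 * (hidx_level y + 1) + 1"
    using hidx_cases[of y] by simp
  ultimately have "hidx_level x - hidx_height x = hidx_level y + 1"
    and "hidx_index x - 2 * hidx_height x = hidx_index y + 2"
    using hidx_of_eq_iff[OF hidx_root_valid[of x]] by blast+
  then show False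
    by (auto simp: hidx_height_def min_def split: if_splits; presburger)
qed

lemma shift_orbits_dirac_h: "shift_orbits_dirac shift_h hidx_root hidx_height absD_h"
proof (intro shift_orbits_dirac.intro shift_orbits.intro shift_orbits_dirac_axioms.intro
    inj_shift_h hidx_root_not_in_range)
  fix x
  show "(shift_h ^^ hidx_height x) (hidx_root x) = x"
    using hidx_cases[of x]
    by (simp add: hidx_root_def funpow_shift_h_hidx_of[OF hidx_root_valid])
       (simp add: hidx_height_def)
  show "absD_h x = absD_h (hidx_root x) + real (hidx_height x)"
  proof -
    have "absD_h x = real (hidx_level x) + 1"
      using hidx_cases[of x] absD_h_hidx_of by metis
    moreover have "absD_h (hidx_root x) = real (hidx_level x - hidx_height x) + 1"
      unfolding hidx_root_def by (rule absD_h_hidx_of[OF hidx_root_valid])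
    moreover have "hidx_height x \<le> hidx_level x"
      by (simp add: hidx_height_def)
    ultimately show ?thesis
      by (simp add: of_nat_diff)
  qed
  show "0 \<le> absD_h x"
    using hidx_cases[of x] by (metis absD_h_hidx_of of_nat_0_le_iff add_nonneg_nonneg zero_le_one)
qed

lemma finite_sublevel_absD_h: "finite {x. absD_h x \<le> R}"
proof (rule finite_subset)
  show "{x. absD_h x \<le> R} \<subseteq> case_prod hidx_of ` ({n. real n \<le> R} \<times> {..2 * nat \<lceil>R\<rceil> + 1})"
  proof
    fix x
    assume "x \<in> {x. absD_h x \<le> R}"
    moreover have "absD_h x = real (hidx_level x) + 1"
      using hidx_cases[of x] absD_h_hidx_of by metis
    ultimately have "real (hidx_level x) \<le> R"
      by simp
    then have "hidx_level x \<le> nat \<lceil>R\<rceil>"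
      by (rule le_nat_ceiling)
    then show "x \<in> case_prod hidx_of ` ({n. real n \<le> R} \<times> {..2 * nat \<lceil>R\<rceil> + 1})"
      using hidx_cases[of x] \<open>real (hidx_level x) \<le> R\<close>
      by (intro image_eqI[of _ _ "(hidx_level x, hidx_index x)"]) auto
  qed
qed (intro finite_imageI finite_cartesian_product finite_nat_real_le finite_atMost)

theorem mainTheorem2:
  shows "regular_spectral_triple (A_infty shift_zp) N_zp \<and>
         regular_spectral_triple (A_infty shift_h) absD_h"
  using shift_orbits_dirac.regular_spectral_triple_A_infty[OF shift_orbits_dirac_zp
      compact_resolvent_if_finite_sublevels[OF finite_sublevel_N_zp]]
    shift_orbits_dirac.regular_spectral_triple_A_infty[OF shift_orbits_dirac_h
      compact_resolvent_if_finite_sublevels[OF finite_sublevel_absD_h]]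
  by blast

end
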